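(* Let $f(x)=\frac1n\sum_{i=1}^n f_i(x)$ where each $f_i:\mathbb{R}^d\to\mathbb{R}$ is differentiable and $\mu_i$-strongly convex with $\mu_i>0$, and let $x_\star$ be the minimizer of $f$. Let $\mathcal{S}$ be a probability distribution over subsets of $[n]$, let $S\sim\mathcal{S}$, $p_i:=\Pr(i\in S)$ and $p_C:=\Pr(S=C)$, and assume $S$ is proper ($p_i>0$ for all $i$) and nonvacuous ($\Pr(S=\varnothing)=0$). For $C\subseteq[n]$ let $f_C(x):=\sum_{i\in C}\frac{1}{np_i}f_i(x)$, and define $$\mu_{\rm AS}:=\min_{C\subseteq[n],\,p_C>0}\sum_{i\in C}\frac{\mu_i}{np_i},\qquad \sigma_{\star,\rm AS}^2:=\sum_{C\subseteq[n],\,p_C>0}p_C\Big\|\sum_{i\in C}\frac{1}{np_i}\nabla f_i(x_\star)\Big\|^2.$$ Consider SPPM-AS: from arbitrary $x_0\in\mathbb{R}^d$, at each step sample $S_k\sim\mathcal{S}$ independently of the past and set $x_{k+1}=\operatorname{prox}_{\gamma f_{S_k}}(x_k)$. Then for any $\gamma>0$ and $k\ge0$, $$\mathbb{E}\|x_k-x_\star\|^2\le\left(\frac{1}{1+\gamma\mu_{\rm AS}}\right)^{2k}\|x_0-x_\star\|^2+\frac{\gamma\sigma_{\star,\rm AS}^2}{\gamma\mu_{\rm AS}^2+2\mu_{\rm AS}}.$$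
   Context: $\operatorname{prox}_{\gamma\phi}(y):=\arg\min_{x\in\mathbb{R}^d}\{\phi(x)+\frac{1}{2\gamma}\|x-y\|^2\}$. $\mu$-strong convexity of $g$: $g(y)+\langle\nabla g(y),x-y\rangle+\frac{\mu}{2}\|x-y\|^2\le g(x)$ for all $x,y$. *)

theory Defs
  imports "HOL-Analysis.Analysis" "HOL-Probability.Probability"
begin

definition prox :: "real \<Rightarrow> ('a::real_normed_vector \<Rightarrow> real) \<Rightarrow> 'a \<Rightarrow> 'a" where
  "prox \<gamma> \<phi> y = (THE x. \<forall>z. \<phi> x + (1 / (2 * \<gamma>)) * (norm (x - y))\<^sup>2
                               \<le> \<phi> z + (1 / (2 * \<gamma>)) * (norm (z - y))\<^sup>2)"

definition strongly_convex_grad :: "real \<Rightarrow> ('a::real_inner \<Rightarrow> real) \<Rightarrow> ('a \<Rightarrow> 'a) \<Rightarrow> bool" where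
  "strongly_convex_grad \<mu> g dg \<longleftrightarrow>
     (\<forall>x y. g y + inner (dg y) (x - y) + (\<mu> / 2) * (norm (x - y))\<^sup>2 \<le> g x)"

definition fC :: "nat \<Rightarrow> (nat \<Rightarrow> real) \<Rightarrow> (nat \<Rightarrow> 'a \<Rightarrow> real) \<Rightarrow> nat set \<Rightarrow> 'a \<Rightarrow> real" where
  "fC n p f C x = (\<Sum>i\<in>C. f i x / (real n * p i))"

text \<open>Distribution of the SPPM-AS iterate x_k: x_{k+1} = prox_{gamma f_{S_k}}(x_k),
  with S_k drawn from S independently of the past.\<close>
primrec sppm_as :: "nat \<Rightarrow> (nat \<Rightarrow> real) \<Rightarrow> (nat \<Rightarrow> 'a::real_normed_vector \<Rightarrow> real)
     \<Rightarrow> nat set pmf \<Rightarrow> real \<Rightarrow> 'a \<Rightarrow> nat \<Rightarrow> 'a pmf" where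
  "sppm_as n p f S \<gamma> x0 0 = return_pmf x0"
| "sppm_as n p f S \<gamma> x0 (Suc k) =
     bind_pmf (sppm_as n p f S \<gamma> x0 k) (\<lambda>x. map_pmf (\<lambda>C. prox \<gamma> (fC n p f C) x) S)"

end

theory Submission
  imports Defs
begin

text \<open>Each step of SPPM-AS solves the resolvent equation x' + gamma grad f_S(x') = x, the
  first-order condition of the prox objective. Since f_C is (sum_{i in C} mu_i / (n p_i))-strongly
  convex, its gradient is mu_AS-strongly monotone, and comparing with x* gives
  (1 + gamma mu_AS) |x' - x*| <= |x - x* - gamma grad f_S(x*)|.
  The weights 1 / (n p_i) make grad f_S(x*) an unbiased estimate of grad f(x*) = 0, so the cross
  term vanishes in expectation and E |x_{k+1} - x*|^2 <= q (E |x_k - x*|^2 + gamma^2 sigma^2) with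
  q = (1 + gamma mu_AS)^-2. Unrolling this recurrence yields the geometric term plus the noise floor
  q gamma^2 sigma^2 / (1 - q) = gamma sigma^2 / (gamma mu_AS^2 + 2 mu_AS).\<close>

lemma gradient_zero_at_global_min:
  fixes F :: "'a::real_inner \<Rightarrow> real"
  assumes "(F has_derivative (\<lambda>h. inner v h)) (at x)" and "\<And>y. F x \<le> F y"
  shows "v = 0"
proof -
  have "(\<lambda>h. inner v h) = (\<lambda>h. 0)"
    using has_derivative_local_min[OF assms(1)] assms(2) by auto
  then have "inner v v = 0" by metis
  then show ?thesis by simp
qed

lemma gradient_sum_zero_at_global_min:
  fixes f :: "'i \<Rightarrow> 'a::real_inner \<Rightarrow> real"
  assumes "\<And>i x. i \<in> I \<Longrightarrow> (f i has_derivative (\<lambda>h. inner (df i x) h)) (at x)"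
    and "\<And>x. (\<Sum>i\<in>I. f i xs) \<le> (\<Sum>i\<in>I. f i x)"
  shows "(\<Sum>i\<in>I. df i xs) = 0"
proof (rule gradient_zero_at_global_min)
  show "((\<lambda>x. \<Sum>i\<in>I. f i x) has_derivative (\<lambda>h. inner (\<Sum>i\<in>I. df i xs) h)) (at xs)"
    unfolding inner_sum_left using assms(1) by (intro has_derivative_sum)
qed (rule assms(2))

definition prox_objective :: "real \<Rightarrow> ('a::real_normed_vector \<Rightarrow> real) \<Rightarrow> 'a \<Rightarrow> 'a \<Rightarrow> real" where
  "prox_objective \<gamma> \<phi> y z = \<phi> z + (1 / (2 * \<gamma>)) * (norm (z - y))\<^sup>2"

lemma prox_eq_The_argmin:
  "prox \<gamma> \<phi> y = (THE z. \<forall>w. prox_objective \<gamma> \<phi> y z \<le> prox_objective \<gamma> \<phi> y w)"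
  unfolding prox_def prox_objective_def ..

lemma prox_objective_minimizer_resolvent:
  fixes \<phi> :: "'a::real_inner \<Rightarrow> real"
  assumes deriv: "(\<phi> has_derivative (\<lambda>h. inner (g z) h)) (at z)" and "\<gamma> > 0"
    and min: "\<And>w. prox_objective \<gamma> \<phi> x z \<le> prox_objective \<gamma> \<phi> x w"
  shows "z + \<gamma> *\<^sub>R g z = x"
proof -
  have "(prox_objective \<gamma> \<phi> x has_derivative (\<lambda>h. inner (g z + (1 / \<gamma>) *\<^sub>R (z - x)) h)) (at z)"
    unfolding prox_objective_def[abs_def] power2_norm_eq_inner
    by (rule derivative_eq_intros refl deriv | simp)+
       (simp add: fun_eq_iff inner_add_right inner_diff_right inner_commute divide_simps)
  then have "g z + (1 / \<gamma>) *\<^sub>R (z - x) = 0"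
    using min by (rule gradient_zero_at_global_min)
  then have "\<gamma> *\<^sub>R (g z + (1 / \<gamma>) *\<^sub>R (z - x)) = 0" by simp
  then show ?thesis using \<open>\<gamma> > 0\<close> by (simp add: scaleR_add_right algebra_simps)
qed

lemma prox_objective_attains_min:
  fixes \<phi> :: "'a::euclidean_space \<Rightarrow> real"
  assumes cont: "continuous_on UNIV \<phi>" and minorant: "\<And>w. \<phi> x + inner u (w - x) \<le> \<phi> w"
    and "\<gamma> > 0"
  shows "\<exists>z. \<forall>w. prox_objective \<gamma> \<phi> x z \<le> prox_objective \<gamma> \<phi> x w"
proof -
  define h where "h = prox_objective \<gamma> \<phi> x"
  define R where "R = 2 * \<gamma> * norm u + 1"
  have "R > 0" using \<open>\<gamma> > 0\<close> unfolding R_def by (simp add: add_nonneg_pos)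
  have "continuous_on (cball x R) h"
    unfolding h_def prox_objective_def[abs_def]
    by (intro continuous_intros continuous_on_subset[OF cont]) auto
  moreover have "cball x R \<noteq> {}" using \<open>R > 0\<close> by simp
  ultimately obtain z where z_min: "\<forall>w\<in>cball x R. h z \<le> h w"
    using continuous_attains_inf[OF compact_cball] by blast
  \<comment> \<open>outside the ball the quadratic term beats the affine minorant, so h exceeds h x\<close>
  have far: "h x < h w" if "w \<notin> cball x R" for w
  proof -
    define d where "d = norm (w - x)"
    have "d > R" using that unfolding d_def by (simp add: dist_norm norm_minus_commute)
    then have "d / (2 * \<gamma>) > norm u" using \<open>\<gamma> > 0\<close> unfolding R_def by (simp add: field_simps)
    then have "d * (d / (2 * \<gamma>) - norm u) > 0" using \<open>d > R\<close> \<open>R > 0\<close> by simp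
    moreover have "inner u (w - x) \<ge> - (norm u * d)"
      unfolding d_def using Cauchy_Schwarz_ineq2[of u "w - x"] by linarith
    moreover have "h w = \<phi> w + d * (d / (2 * \<gamma>) - norm u) + norm u * d"
      unfolding h_def prox_objective_def d_def by (simp add: power2_eq_square algebra_simps)
    ultimately show ?thesis using minorant[of w] by (simp add: h_def prox_objective_def)
  qed
  have "h z \<le> h x" using z_min \<open>R > 0\<close> by simp
  then have "h z \<le> h w" for w
    using z_min far[of w] by (cases "w \<in> cball x R") auto
  then show ?thesis unfolding h_def by blast
qed

lemma prox_resolvent:
  fixes \<phi> :: "'a::euclidean_space \<Rightarrow> real"
  assumes deriv: "\<And>z. (\<phi> has_derivative (\<lambda>h. inner (g z) h)) (at z)"
    and convex: "\<And>z w. \<phi> z + inner (g z) (w - z) \<le> \<phi> w" and "\<gamma> > 0"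
  shows "prox \<gamma> \<phi> x + \<gamma> *\<^sub>R g (prox \<gamma> \<phi> x) = x"
proof -
  define M where "M z \<longleftrightarrow> (\<forall>w. prox_objective \<gamma> \<phi> x z \<le> prox_objective \<gamma> \<phi> x w)" for z
  have resolvent: "z + \<gamma> *\<^sub>R g z = x" if "M z" for z
    using that unfolding M_def by (intro prox_objective_minimizer_resolvent[OF deriv \<open>\<gamma> > 0\<close>]) blast
  have "continuous_on UNIV \<phi>"
    using has_derivative_continuous[OF deriv] by (simp add: continuous_at_imp_continuous_on)
  then have "\<exists>z. M z"
    unfolding M_def using prox_objective_attains_min convex \<open>\<gamma> > 0\<close> by blast
  \<comment> \<open>the resolvent equation has at most one solution since the gradient is monotone\<close>
  moreover have "z1 = z2" if "M z1" "M z2" for z1 z2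
  proof -
    have "(z1 - z2) + \<gamma> *\<^sub>R (g z1 - g z2) = 0"
      using resolvent[OF \<open>M z1\<close>] resolvent[OF \<open>M z2\<close>] by (simp add: algebra_simps)
    then have "inner (z1 - z2) (z1 - z2) + \<gamma> * inner (g z1 - g z2) (z1 - z2) = 0"
      by (metis inner_add_left inner_scaleR_left inner_zero_left)
    moreover have "inner (g z1 - g z2) (z1 - z2) \<ge> 0"
      using convex[of z1 z2] convex[of z2 z1] by (simp add: inner_diff_left inner_diff_right)
    then have "\<gamma> * inner (g z1 - g z2) (z1 - z2) \<ge> 0" using \<open>\<gamma> > 0\<close> by simp
    ultimately have "\<not> 0 < inner (z1 - z2) (z1 - z2)" by linarith
    then show ?thesis by simp
  qed
  ultimately have "M (THE z. M z)" by (metis theI)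
  then show ?thesis unfolding prox_eq_The_argmin M_def[symmetric] by (rule resolvent)
qed

lemma strongly_convex_grad_imp_strongly_monotone:
  assumes "strongly_convex_grad \<mu> g dg"
  shows "\<mu> * (norm (x - y))\<^sup>2 \<le> inner (dg x - dg y) (x - y)"
proof -
  have "g y + inner (dg y) (x - y) + (\<mu> / 2) * (norm (x - y))\<^sup>2 \<le> g x"
    and "g x + inner (dg x) (y - x) + (\<mu> / 2) * (norm (y - x))\<^sup>2 \<le> g y"
    using assms unfolding strongly_convex_grad_def by blast+
  then show ?thesis by (simp add: inner_diff_left inner_diff_right norm_minus_commute)
qed

lemma strongly_convex_grad_weaken:
  fixes g :: "'a::real_inner \<Rightarrow> real"
  assumes "strongly_convex_grad \<mu> g dg" and "\<mu>' \<le> \<mu>"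
  shows "strongly_convex_grad \<mu>' g dg"
  unfolding strongly_convex_grad_def
proof (intro allI)
  fix x y :: 'a
  have "(\<mu>' / 2) * (norm (x - y))\<^sup>2 \<le> (\<mu> / 2) * (norm (x - y))\<^sup>2"
    using assms(2) by (intro mult_right_mono) auto
  moreover have "g y + inner (dg y) (x - y) + (\<mu> / 2) * (norm (x - y))\<^sup>2 \<le> g x"
    using assms(1) unfolding strongly_convex_grad_def by blast
  ultimately show "g y + inner (dg y) (x - y) + (\<mu>' / 2) * (norm (x - y))\<^sup>2 \<le> g x"
    by linarith
qed

lemma strongly_convex_grad_imp_convex:
  assumes "strongly_convex_grad \<mu> g dg" and "\<mu> \<ge> 0"
  shows "g x + inner (dg x) (z - x) \<le> g z"
  using strongly_convex_grad_weaken[OF assms(1,2)] unfolding strongly_convex_grad_def by simp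

lemma strongly_convex_grad_sum:
  fixes f :: "'i \<Rightarrow> 'a::real_inner \<Rightarrow> real"
  assumes "\<And>i. i \<in> I \<Longrightarrow> strongly_convex_grad (\<mu> i) (f i) (df i)"
    and "\<And>i. i \<in> I \<Longrightarrow> w i \<ge> 0"
  shows "strongly_convex_grad (\<Sum>i\<in>I. w i * \<mu> i) (\<lambda>x. \<Sum>i\<in>I. w i * f i x)
           (\<lambda>x. \<Sum>i\<in>I. w i *\<^sub>R df i x)"
  unfolding strongly_convex_grad_def
proof (intro allI)
  fix x y :: 'a
  define N where "N = (norm (x - y))\<^sup>2"
  have "(\<Sum>i\<in>I. w i * f i y) + inner (\<Sum>i\<in>I. w i *\<^sub>R df i y) (x - y)
        + ((\<Sum>i\<in>I. w i * \<mu> i) / 2) * N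
      = (\<Sum>i\<in>I. w i * (f i y + inner (df i y) (x - y) + (\<mu> i / 2) * N))"
    by (simp add: inner_sum_left sum_divide_distrib sum_distrib_right distrib_left sum.distrib
                  mult.assoc)
  also have "\<dots> \<le> (\<Sum>i\<in>I. w i * f i x)"
    using assms unfolding strongly_convex_grad_def N_def by (intro sum_mono mult_left_mono) auto
  finally show "(\<Sum>i\<in>I. w i * f i y) + inner (\<Sum>i\<in>I. w i *\<^sub>R df i y) (x - y)
      + ((\<Sum>i\<in>I. w i * \<mu> i) / 2) * (norm (x - y))\<^sup>2 \<le> (\<Sum>i\<in>I. w i * f i x)"
    unfolding N_def .
qed

lemma norm_add_scaleR_ge:
  fixes a b :: "'a::real_inner"
  assumes "m * (norm a)\<^sup>2 \<le> inner b a" and "m \<ge> 0" and "\<gamma> \<ge> 0"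
  shows "(1 + \<gamma> * m)\<^sup>2 * (norm a)\<^sup>2 \<le> (norm (a + \<gamma> *\<^sub>R b))\<^sup>2"
proof -
  have "m * norm a \<le> norm b"
  proof (cases "a = 0")
    case False
    have "m * norm a * norm a \<le> norm b * norm a"
      using assms(1) Cauchy_Schwarz_ineq2[of b a] by (simp add: power2_eq_square)
    then show ?thesis using False by simp
  qed (simp add: \<open>m \<ge> 0\<close>)
  then have "\<gamma>\<^sup>2 * (m * norm a)\<^sup>2 \<le> \<gamma>\<^sup>2 * (norm b)\<^sup>2"
    using \<open>m \<ge> 0\<close> by (intro mult_left_mono power_mono) auto
  moreover have "2 * \<gamma> * (m * (norm a)\<^sup>2) \<le> 2 * \<gamma> * inner b a"
    using assms by (intro mult_left_mono) auto
  moreover have "(norm (a + \<gamma> *\<^sub>R b))\<^sup>2 = (norm a)\<^sup>2 + 2 * \<gamma> * inner b a + \<gamma>\<^sup>2 * (norm b)\<^sup>2"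
    unfolding power2_norm_eq_inner
    by (simp add: inner_add_left inner_add_right inner_commute[of a b] power2_eq_square algebra_simps)
  ultimately show ?thesis by (simp add: power2_eq_square algebra_simps)
qed

lemma prox_contraction:
  fixes \<phi> :: "'a::euclidean_space \<Rightarrow> real"
  assumes deriv: "\<And>z. (\<phi> has_derivative (\<lambda>h. inner (g z) h)) (at z)"
    and sc: "strongly_convex_grad \<mu> \<phi> g" and "\<mu> \<ge> 0" and "\<gamma> > 0"
  shows "(1 + \<gamma> * \<mu>)\<^sup>2 * (norm (prox \<gamma> \<phi> x - y))\<^sup>2 \<le> (norm (x - y - \<gamma> *\<^sub>R g y))\<^sup>2"
proof -
  define z where "z = prox \<gamma> \<phi> x"
  have "z + \<gamma> *\<^sub>R g z = x"
    unfolding z_def using strongly_convex_grad_imp_convex[OF sc \<open>\<mu> \<ge> 0\<close>]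
    by (intro prox_resolvent[OF deriv _ \<open>\<gamma> > 0\<close>])
  have "(1 + \<gamma> * \<mu>)\<^sup>2 * (norm (z - y))\<^sup>2 \<le> (norm ((z - y) + \<gamma> *\<^sub>R (g z - g y)))\<^sup>2"
    using strongly_convex_grad_imp_strongly_monotone[OF sc] assms
    by (intro norm_add_scaleR_ge) (auto simp: inner_commute)
  also have "(z - y) + \<gamma> *\<^sub>R (g z - g y) = x - y - \<gamma> *\<^sub>R g y"
    using \<open>z + \<gamma> *\<^sub>R g z = x\<close> by (auto simp: algebra_simps)
  finally show ?thesis unfolding z_def .
qed

lemma fC_eq_weighted_sum: "fC n p f C = (\<lambda>x. \<Sum>i\<in>C. (1 / (real n * p i)) * f i x)"
  by (simp add: fC_def fun_eq_iff)

lemma fC_has_derivative: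
  assumes "\<And>i. i \<in> C \<Longrightarrow> (f i has_derivative (\<lambda>h. inner (df i x) h)) (at x)"
  shows "(fC n p f C has_derivative
           (\<lambda>h. inner (\<Sum>i\<in>C. (1 / (real n * p i)) *\<^sub>R df i x) h)) (at x)"
  unfolding fC_eq_weighted_sum inner_sum_left
  by (rule derivative_eq_intros assms refl | assumption)+ simp

lemma fC_strongly_convex:
  assumes "\<And>i. i \<in> C \<Longrightarrow> p i \<ge> 0"
    and "\<And>i. i \<in> C \<Longrightarrow> strongly_convex_grad (\<mu> i) (f i) (df i)"
  shows "strongly_convex_grad (\<Sum>i\<in>C. \<mu> i / (real n * p i)) (fC n p f C)
           (\<lambda>x. \<Sum>i\<in>C. (1 / (real n * p i)) *\<^sub>R df i x)"
  using strongly_convex_grad_sum[of C \<mu> f df "\<lambda>i. 1 / (real n * p i)"] assms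
  unfolding fC_eq_weighted_sum by simp

lemma fC_prox_contraction:
  fixes f :: "nat \<Rightarrow> 'a::euclidean_space \<Rightarrow> real"
  assumes grad: "\<And>i x. i \<in> C \<Longrightarrow> (f i has_derivative (\<lambda>h. inner (df i x) h)) (at x)"
    and sconv: "\<And>i. i \<in> C \<Longrightarrow> strongly_convex_grad (\<mu> i) (f i) (df i)"
    and "\<And>i. i \<in> C \<Longrightarrow> p i \<ge> 0"
    and "0 \<le> m" and "m \<le> (\<Sum>i\<in>C. \<mu> i / (real n * p i))" and "\<gamma> > 0"
  shows "(norm (prox \<gamma> (fC n p f C) x - y))\<^sup>2
         \<le> (1 / (1 + \<gamma> * m))\<^sup>2 * (norm (x - y - \<gamma> *\<^sub>R (\<Sum>i\<in>C. (1 / (real n * p i)) *\<^sub>R df i y)))\<^sup>2"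
proof -
  have "strongly_convex_grad (\<Sum>i\<in>C. \<mu> i / (real n * p i)) (fC n p f C)
          (\<lambda>z. \<Sum>i\<in>C. (1 / (real n * p i)) *\<^sub>R df i z)"
    using assms by (intro fC_strongly_convex)
  then have "strongly_convex_grad m (fC n p f C) (\<lambda>z. \<Sum>i\<in>C. (1 / (real n * p i)) *\<^sub>R df i z)"
    using assms(5) by (rule strongly_convex_grad_weaken)
  then have "(1 + \<gamma> * m)\<^sup>2 * (norm (prox \<gamma> (fC n p f C) x - y))\<^sup>2
      \<le> (norm (x - y - \<gamma> *\<^sub>R (\<Sum>i\<in>C. (1 / (real n * p i)) *\<^sub>R df i y)))\<^sup>2"
    using grad \<open>0 \<le> m\<close> \<open>\<gamma> > 0\<close> by (intro prox_contraction fC_has_derivative)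
  moreover have "0 \<le> \<gamma> * m" using \<open>0 \<le> m\<close> \<open>\<gamma> > 0\<close> by simp
  then have "(1 + \<gamma> * m)\<^sup>2 > 0" by (intro zero_less_power) linarith
  ultimately show ?thesis by (simp add: power_divide pos_le_divide_eq mult.commute)
qed

lemma prob_member_eq_sum:
  assumes "finite (set_pmf S)"
  shows "measure_pmf.prob S {C. i \<in> C} = (\<Sum>C\<in>set_pmf S. if i \<in> C then pmf S C else 0)"
proof -
  have "measure_pmf.prob S {C. i \<in> C} = measure_pmf.prob S (set_pmf S \<inter> {C. i \<in> C})"
    using measure_Int_set_pmf[of S "{C. i \<in> C}"] by (simp only: Int_commute)
  also have "\<dots> = sum (pmf S) (set_pmf S \<inter> {C. i \<in> C})"
    using assms by (intro measure_measure_pmf_finite) auto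
  also have "\<dots> = (\<Sum>C\<in>set_pmf S. if i \<in> C then pmf S C else 0)"
    using assms by (simp add: sum.inter_restrict)
  finally show ?thesis .
qed

lemma importance_weighted_sum_unbiased:
  fixes S :: "nat set pmf" and v :: "nat \<Rightarrow> 'a::real_vector"
  assumes p_def: "\<And>i. p i = measure_pmf.prob S {C. i \<in> C}"
    and sub: "set_pmf S \<subseteq> Pow {..<n}" and proper: "\<And>i. i < n \<Longrightarrow> p i > 0"
  shows "(\<Sum>C\<in>set_pmf S. pmf S C *\<^sub>R (\<Sum>i\<in>C. (1 / (real n * p i)) *\<^sub>R v i))
         = (1 / real n) *\<^sub>R (\<Sum>i<n. v i)"
proof -
  have fin: "finite (set_pmf S)" using sub by (rule finite_subset) simp
  have p_sum: "(\<Sum>C\<in>set_pmf S. if i \<in> C then pmf S C else 0) = p i" for i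
    using prob_member_eq_sum[OF fin] by (simp add: p_def)
  have "pmf S C *\<^sub>R (\<Sum>i\<in>C. (1 / (real n * p i)) *\<^sub>R v i)
      = (\<Sum>i<n. ((if i \<in> C then pmf S C else 0) / (real n * p i)) *\<^sub>R v i)"
    if "C \<in> set_pmf S" for C
  proof -
    have "{..<n} \<inter> C = C" using sub that by blast
    then have "(\<Sum>i\<in>C. (1 / (real n * p i)) *\<^sub>R v i)
        = (\<Sum>i<n. if i \<in> C then (1 / (real n * p i)) *\<^sub>R v i else 0)"
      using sum.inter_restrict[of "{..<n}" "\<lambda>i. (1 / (real n * p i)) *\<^sub>R v i" C] by simp
    then show ?thesis by (auto simp: scaleR_sum_right intro!: sum.cong)
  qed
  then have "(\<Sum>C\<in>set_pmf S. pmf S C *\<^sub>R (\<Sum>i\<in>C. (1 / (real n * p i)) *\<^sub>R v i))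
      = (\<Sum>i<n. \<Sum>C\<in>set_pmf S. ((if i \<in> C then pmf S C else 0) / (real n * p i)) *\<^sub>R v i)"
    by (simp add: sum.swap[of _ "set_pmf S"])
  also have "\<dots> = (\<Sum>i<n. (p i / (real n * p i)) *\<^sub>R v i)"
    by (simp only: scaleR_sum_left[symmetric] sum_divide_distrib[symmetric] p_sum)
  also have "\<dots> = (1 / real n) *\<^sub>R (\<Sum>i<n. v i)"
    by (auto simp: scaleR_sum_right intro!: sum.cong dest: proper)
  finally show ?thesis .
qed

lemma Min_sampled_modulus_pos:
  fixes S :: "nat set pmf"
  assumes "set_pmf S \<subseteq> Pow {..<n}" and "pmf S {} = 0"
    and "\<And>i. i < n \<Longrightarrow> \<mu> i > 0" and "\<And>i. i < n \<Longrightarrow> p i > 0" and "n \<ge> 1"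
  shows "Min ((\<lambda>C. \<Sum>i\<in>C. \<mu> i / (real n * p i)) ` set_pmf S) > 0"
proof -
  have fin: "finite (set_pmf S)" using assms(1) by (rule finite_subset) simp
  have "(\<Sum>i\<in>C. \<mu> i / (real n * p i)) > 0" if "C \<in> set_pmf S" for C
  proof -
    have "C \<subseteq> {..<n}" "C \<noteq> {}" using assms(1,2) that by (auto simp: set_pmf_iff)
    then show ?thesis
      using assms(3-5) by (intro sum_pos divide_pos_pos) (auto intro: finite_subset)
  qed
  then show ?thesis using fin by (simp add: Min_gr_iff set_pmf_not_empty)
qed

lemma expectation_norm_sq_centered:
  fixes v :: "'b \<Rightarrow> 'a::real_inner"
  assumes fin: "finite (set_pmf S)" and mean0: "(\<Sum>C\<in>set_pmf S. pmf S C *\<^sub>R v C) = 0"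
  shows "measure_pmf.expectation S (\<lambda>C. (norm (u - v C))\<^sup>2)
         = (norm u)\<^sup>2 + (\<Sum>C\<in>set_pmf S. pmf S C * (norm (v C))\<^sup>2)"
proof -
  have "measure_pmf.expectation S (\<lambda>C. (norm (u - v C))\<^sup>2)
      = (\<Sum>C\<in>set_pmf S. (norm (u - v C))\<^sup>2 * pmf S C)"
    using fin by (intro integral_measure_pmf_real) auto
  also have "\<dots> = (\<Sum>C\<in>set_pmf S. pmf S C * (norm u)\<^sup>2 - 2 * inner u (pmf S C *\<^sub>R v C)
                                    + pmf S C * (norm (v C))\<^sup>2)"
    by (intro sum.cong refl)
       (simp add: power2_norm_eq_inner inner_diff_left inner_diff_right inner_commute algebra_simps)
  also have "\<dots> = (norm u)\<^sup>2 * (\<Sum>C\<in>set_pmf S. pmf S C)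
      - 2 * inner u (\<Sum>C\<in>set_pmf S. pmf S C *\<^sub>R v C) + (\<Sum>C\<in>set_pmf S. pmf S C * (norm (v C))\<^sup>2)"
    by (simp add: sum.distrib sum_subtractf sum_distrib_left sum_distrib_right inner_sum_right mult.commute)
  also have "\<dots> = (norm u)\<^sup>2 + (\<Sum>C\<in>set_pmf S. pmf S C * (norm (v C))\<^sup>2)"
    using fin by (simp add: mean0 sum_pmf_eq_1)
  finally show ?thesis .
qed

lemma finite_set_pmf_sppm_as:
  assumes "finite (set_pmf S)"
  shows "finite (set_pmf (sppm_as n p f S \<gamma> x0 k))"
  by (induction k) (simp_all add: assms)

lemma expectation_sppm_as_Suc_le:
  fixes \<psi> :: "'a::real_normed_vector \<Rightarrow> real"
  assumes fin: "finite (set_pmf S)"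
    and step: "\<And>x. measure_pmf.expectation S (\<lambda>C. \<psi> (prox \<gamma> (fC n p f C) x)) \<le> q * \<psi> x + c"
  shows "measure_pmf.expectation (sppm_as n p f S \<gamma> x0 (Suc k)) \<psi>
         \<le> q * measure_pmf.expectation (sppm_as n p f S \<gamma> x0 k) \<psi> + c"
proof -
  define P where "P = sppm_as n p f S \<gamma> x0 k"
  have fin_P: "finite (set_pmf P)" unfolding P_def by (rule finite_set_pmf_sppm_as[OF fin])
  have "measure_pmf.expectation (sppm_as n p f S \<gamma> x0 (Suc k)) \<psi>
      = (\<Sum>x\<in>set_pmf P. pmf P x * measure_pmf.expectation S (\<lambda>C. \<psi> (prox \<gamma> (fC n p f C) x)))"
    unfolding sppm_as.simps P_def[symmetric]
    by (subst pmf_expectation_bind[OF fin_P]) (auto simp: fin integral_map_pmf)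
  also have "\<dots> \<le> (\<Sum>x\<in>set_pmf P. pmf P x * (q * \<psi> x + c))"
    by (intro sum_mono mult_left_mono step) auto
  also have "\<dots> = q * (\<Sum>x\<in>set_pmf P. \<psi> x * pmf P x) + c * (\<Sum>x\<in>set_pmf P. pmf P x)"
    by (simp add: sum_distrib_left sum_distrib_right sum.distrib algebra_simps)
  also have "\<dots> = q * measure_pmf.expectation P \<psi> + c"
    using fin_P by (simp add: sum_pmf_eq_1 integral_measure_pmf_real[of "set_pmf P"])
  finally show ?thesis unfolding P_def .
qed

lemma linear_recurrence_bound:
  fixes a :: "nat \<Rightarrow> real"
  assumes step: "\<And>k. a (Suc k) \<le> q * a k + c" and "0 \<le> q" "q < 1" "0 \<le> c"
  shows "a k \<le> q ^ k * a 0 + c / (1 - q)"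
proof (induction k)
  case 0
  show ?case using assms by simp
next
  case (Suc k)
  have "a (Suc k) \<le> q * (q ^ k * a 0 + c / (1 - q)) + c"
    using step[of k] mult_left_mono[OF Suc \<open>0 \<le> q\<close>] by linarith
  also have "\<dots> = q ^ Suc k * a 0 + c / (1 - q)"
    using \<open>q < 1\<close> by (simp add: field_simps)
  finally show ?case .
qed

lemma noise_floor_closed_form:
  fixes \<gamma> \<mu> s :: real
  assumes "\<gamma> > 0" "\<mu> > 0"
  shows "(1 / (1 + \<gamma> * \<mu>))\<^sup>2 * (\<gamma>\<^sup>2 * s) / (1 - (1 / (1 + \<gamma> * \<mu>))\<^sup>2)
         = \<gamma> * s / (\<gamma> * \<mu>\<^sup>2 + 2 * \<mu>)"
proof -
  define t where "t = (1 + \<gamma> * \<mu>)\<^sup>2"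
  have t_minus_1: "t - 1 = \<gamma> * (\<gamma> * \<mu>\<^sup>2 + 2 * \<mu>)"
    unfolding t_def by (simp add: power2_eq_square algebra_simps)
  moreover have "\<gamma> * (\<gamma> * \<mu>\<^sup>2 + 2 * \<mu>) > 0" using assms by (simp add: add_pos_pos)
  ultimately have "t > 1" by linarith
  have "(1 / (1 + \<gamma> * \<mu>))\<^sup>2 = 1 / t" unfolding t_def by (simp add: power_divide)
  then have "(1 / (1 + \<gamma> * \<mu>))\<^sup>2 * (\<gamma>\<^sup>2 * s) / (1 - (1 / (1 + \<gamma> * \<mu>))\<^sup>2) = \<gamma>\<^sup>2 * s / (t - 1)"
    using \<open>t > 1\<close> by (simp add: field_simps)
  also have "\<dots> = \<gamma> * s / (\<gamma> * \<mu>\<^sup>2 + 2 * \<mu>)"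
    using \<open>\<gamma> > 0\<close> by (simp add: t_minus_1 power2_eq_square)
  finally show ?thesis .
qed


lemma sppm_as_step_expectation:
  fixes S :: "nat set pmf" and f :: "nat \<Rightarrow> 'a::euclidean_space \<Rightarrow> real"
  assumes p_def: "\<And>i. p i = measure_pmf.prob S {C. i \<in> C}"
    and grad: "\<And>i x. i < n \<Longrightarrow> (f i has_derivative (\<lambda>h. inner (df i x) h)) (at x)"
    and sconv: "\<And>i. i < n \<Longrightarrow> strongly_convex_grad (\<mu> i) (f i) (df i)"
    and crit: "(\<Sum>i<n. df i xs) = 0"
    and sub: "set_pmf S \<subseteq> Pow {..<n}" and proper: "\<And>i. i < n \<Longrightarrow> p i > 0"
    and "0 \<le> m" and m_le: "\<And>C. C \<in> set_pmf S \<Longrightarrow> m \<le> (\<Sum>i\<in>C. \<mu> i / (real n * p i))"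
    and "\<gamma> > 0"
  shows "measure_pmf.expectation S (\<lambda>C. (norm (prox \<gamma> (fC n p f C) x - xs))\<^sup>2)
    \<le> (1 / (1 + \<gamma> * m))\<^sup>2 * ((norm (x - xs))\<^sup>2
         + \<gamma>\<^sup>2 * (\<Sum>C\<in>set_pmf S. pmf S C * (norm (\<Sum>i\<in>C. (1 / (real n * p i)) *\<^sub>R df i xs))\<^sup>2))"
proof -
  define g where "g C = (\<Sum>i\<in>C. (1 / (real n * p i)) *\<^sub>R df i xs)" for C
  define q where "q = (1 / (1 + \<gamma> * m))\<^sup>2"
  have fin: "finite (set_pmf S)" using sub by (rule finite_subset) simp
  have contract: "(norm (prox \<gamma> (fC n p f C) x - xs))\<^sup>2 \<le> q * (norm ((x - xs) - \<gamma> *\<^sub>R g C))\<^sup>2"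
    if "C \<in> set_pmf S" for C
  proof -
    have C_lt: "i < n" if "i \<in> C" for i using sub \<open>C \<in> set_pmf S\<close> that by blast
    show ?thesis
      unfolding q_def g_def using m_le[OF that] \<open>0 \<le> m\<close> \<open>\<gamma> > 0\<close>
      by (intro fC_prox_contraction) (simp_all add: C_lt grad sconv proper less_imp_le)
  qed
  have "(\<Sum>C\<in>set_pmf S. pmf S C *\<^sub>R g C) = (1 / real n) *\<^sub>R (\<Sum>i<n. df i xs)"
    unfolding g_def using p_def sub proper by (rule importance_weighted_sum_unbiased)
  moreover have "(\<Sum>C\<in>set_pmf S. pmf S C *\<^sub>R (\<gamma> *\<^sub>R g C)) = \<gamma> *\<^sub>R (\<Sum>C\<in>set_pmf S. pmf S C *\<^sub>R g C)"
    by (simp add: scaleR_sum_right mult.commute)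
  ultimately have mean0: "(\<Sum>C\<in>set_pmf S. pmf S C *\<^sub>R (\<gamma> *\<^sub>R g C)) = 0"
    using crit by simp
  have "measure_pmf.expectation S (\<lambda>C. (norm (prox \<gamma> (fC n p f C) x - xs))\<^sup>2)
      = (\<Sum>C\<in>set_pmf S. (norm (prox \<gamma> (fC n p f C) x - xs))\<^sup>2 * pmf S C)"
    using fin by (intro integral_measure_pmf_real) auto
  also have "\<dots> \<le> (\<Sum>C\<in>set_pmf S. q * (norm ((x - xs) - \<gamma> *\<^sub>R g C))\<^sup>2 * pmf S C)"
    by (intro sum_mono mult_right_mono contract) auto
  also have "\<dots> = q * measure_pmf.expectation S (\<lambda>C. (norm ((x - xs) - \<gamma> *\<^sub>R g C))\<^sup>2)"
    using fin by (simp add: integral_measure_pmf_real[of "set_pmf S"] sum_distrib_left mult.assoc)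
  also have "\<dots> = q * ((norm (x - xs))\<^sup>2 + \<gamma>\<^sup>2 * (\<Sum>C\<in>set_pmf S. pmf S C * (norm (g C))\<^sup>2))"
    by (simp add: expectation_norm_sq_centered[OF fin mean0] sum_distrib_left power_mult_distrib mult_ac)
  finally show ?thesis unfolding q_def g_def .
qed

theorem mainTheorem5:
  fixes n :: nat
    and f :: "nat \<Rightarrow> 'a::euclidean_space \<Rightarrow> real"
    and df :: "nat \<Rightarrow> 'a \<Rightarrow> 'a"
    and \<mu> :: "nat \<Rightarrow> real"
    and xs :: 'a
    and S :: "nat set pmf"
    and \<gamma> :: real and x0 :: 'a and k :: nat
  assumes n_pos: "n \<ge> 1"
    and grad: "\<And>i x. i < n \<Longrightarrow> (f i has_derivative (\<lambda>h. inner (df i x) h)) (at x)"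
    and mu_pos: "\<And>i. i < n \<Longrightarrow> \<mu> i > 0"
    and sconv: "\<And>i. i < n \<Longrightarrow> strongly_convex_grad (\<mu> i) (f i) (df i)"
    and xs_min: "\<And>x. (1 / real n) * (\<Sum>i<n. f i xs) \<le> (1 / real n) * (\<Sum>i<n. f i x)"
    and S_sub: "set_pmf S \<subseteq> Pow {..<n}"
    and proper: "\<And>i. i < n \<Longrightarrow> measure_pmf.prob S {C. i \<in> C} > 0"
    and nonvacuous: "pmf S {} = 0"
    and gamma_pos: "\<gamma> > 0"
  shows
    "let p = (\<lambda>i. measure_pmf.prob S {C. i \<in> C});
         muAS = Min ((\<lambda>C. \<Sum>i\<in>C. \<mu> i / (real n * p i)) ` set_pmf S);
         sigAS = (\<Sum>C\<in>set_pmf S. pmf S C *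
                    (norm (\<Sum>i\<in>C. (1 / (real n * p i)) *\<^sub>R df i xs))\<^sup>2)
     in measure_pmf.expectation (sppm_as n p f S \<gamma> x0 k) (\<lambda>x. (norm (x - xs))\<^sup>2)
        \<le> (1 / (1 + \<gamma> * muAS)) ^ (2 * k) * (norm (x0 - xs))\<^sup>2
          + \<gamma> * sigAS / (\<gamma> * muAS\<^sup>2 + 2 * muAS)"
proof -
  define p where "p = (\<lambda>i. measure_pmf.prob S {C. i \<in> C})"
  define muAS where "muAS = Min ((\<lambda>C. \<Sum>i\<in>C. \<mu> i / (real n * p i)) ` set_pmf S)"
  define sigAS where "sigAS = (\<Sum>C\<in>set_pmf S. pmf S C *
                    (norm (\<Sum>i\<in>C. (1 / (real n * p i)) *\<^sub>R df i xs))\<^sup>2)"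
  define q where "q = (1 / (1 + \<gamma> * muAS))\<^sup>2"
  define E where "E j = measure_pmf.expectation (sppm_as n p f S \<gamma> x0 j) (\<lambda>x. (norm (x - xs))\<^sup>2)" for j
  have fin: "finite (set_pmf S)" using S_sub by (rule finite_subset) simp
  have muAS_le: "muAS \<le> (\<Sum>i\<in>C. \<mu> i / (real n * p i))" if "C \<in> set_pmf S" for C
    unfolding muAS_def using fin that by simp
  have "muAS > 0"
    unfolding muAS_def p_def using S_sub nonvacuous mu_pos proper n_pos by (rule Min_sampled_modulus_pos)
  have crit: "(\<Sum>i<n. df i xs) = 0"
  proof (rule gradient_sum_zero_at_global_min)
    show "(\<Sum>i<n. f i xs) \<le> (\<Sum>i<n. f i y)" for y
      using xs_min[of y] n_pos by (simp add: divide_le_cancel)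
  qed (use grad in auto)
  have "E (Suc j) \<le> q * E j + q * (\<gamma>\<^sup>2 * sigAS)" for j
    unfolding E_def q_def sigAS_def
    using sppm_as_step_expectation[OF _ grad sconv crit S_sub _ _ muAS_le gamma_pos] proper \<open>muAS > 0\<close>
    by (intro expectation_sppm_as_Suc_le fin) (auto simp: p_def distrib_left)
  moreover have "1 < 1 + \<gamma> * muAS" using \<open>muAS > 0\<close> gamma_pos by simp
  then have "0 < q" "q < 1" unfolding q_def by (auto simp: power_less_one_iff divide_less_eq)
  moreover have "sigAS \<ge> 0" unfolding sigAS_def by (intro sum_nonneg) auto
  ultimately have "E k \<le> q ^ k * E 0 + q * (\<gamma>\<^sup>2 * sigAS) / (1 - q)"
    by (intro linear_recurrence_bound) auto
  then show ?thesis
    using noise_floor_closed_form[OF gamma_pos \<open>muAS > 0\<close>, of sigAS]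
    unfolding Let_def p_def[symmetric] muAS_def[symmetric] sigAS_def[symmetric]
    by (simp add: E_def q_def power_mult mult.assoc)
qed

end
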